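(* Let $U$ be a finite nonempty set, $R$ an equivalence relation on $U$, and $M(R)$ the support matroid induced by $R$, with rank function $r_{(R)}$. Then for every $X\subseteq U$, $$r_{(R)}(X)=|\{RN(x)\mid x\in U,\ RN(x)\cap X\neq\emptyset\}|,$$ i.e. the number of equivalence classes of $R$ meeting $X$.
   Context: For $x\in U$, $RN(x)=\{y\in U\mid xRy\}$; $R^{*}(X)=\{x\in U\mid RN(x)\cap X\neq\emptyset\}$. Let $\mathbf{S}(R)=\{X\subseteq U\mid R^{*}(X)=U\}$. The support matroid $M(R)=(U,\mathbf{I}(R))$ is the matroid on $U$ whose independent sets $\mathbf{I}(R)$ are the subsets of inclusion-minimal members of $\mathbf{S}(R)$. The rank function of a matroid $(U,\mathbf{I})$ is $r(X)=\max\{|I|\mid I\subseteq X,\ I\in\mathbf{I}\}$. *)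

theory Defs
  imports Main
begin

definition RN :: "'a set \<Rightarrow> 'a rel \<Rightarrow> 'a \<Rightarrow> 'a set" where
  "RN U R x = {y \<in> U. (x, y) \<in> R}"

definition Rstar :: "'a set \<Rightarrow> 'a rel \<Rightarrow> 'a set \<Rightarrow> 'a set" where
  "Rstar U R X = {x \<in> U. RN U R x \<inter> X \<noteq> {}}"

definition supp_sets :: "'a set \<Rightarrow> 'a rel \<Rightarrow> 'a set set" where
  "supp_sets U R = {X. X \<subseteq> U \<and> Rstar U R X = U}"

definition min_supp_sets :: "'a set \<Rightarrow> 'a rel \<Rightarrow> 'a set set" where
  "min_supp_sets U R =
     {X \<in> supp_sets U R. \<forall>Y \<in> supp_sets U R. Y \<subseteq> X \<longrightarrow> Y = X}"

definition supp_indep :: "'a set \<Rightarrow> 'a rel \<Rightarrow> 'a set set" where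
  "supp_indep U R = {I. \<exists>X \<in> min_supp_sets U R. I \<subseteq> X}"

definition supp_rank :: "'a set \<Rightarrow> 'a rel \<Rightarrow> 'a set \<Rightarrow> nat" where
  "supp_rank U R X = Max {card I | I. I \<subseteq> X \<and> I \<in> supp_indep U R}"

end

theory Submission
  imports Defs
begin

text \<open>For an equivalence relation, a set supports U exactly when it meets every class, and it is
  a minimal support exactly when it meets every class once. Hence the independent sets are the
  subsets of U on which the class map x \<mapsto> R``{x} is injective, and a largest independent subset
  of X picks one element from each class meeting X.\<close>

lemma inj_on_extend_to_transversal:
  assumes "B \<subseteq> A" and "inj_on f B"
  obtains T where "B \<subseteq> T" "T \<subseteq> A" "inj_on f T" "f ` T = f ` A"
proof -
  have "f ` A - f ` B \<subseteq> f ` A" by blast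
  then obtain C where C: "C \<subseteq> A" "inj_on f C" "f ` C = f ` A - f ` B"
    unfolding subset_image_inj by metis
  have "f ` B \<inter> f ` C = {}"
    using C(3) by blast
  then have "inj_on f (B \<union> C)"
    using assms(2) C(2) by (auto simp: inj_on_Un)
  moreover have "f ` (B \<union> C) = f ` A"
    using assms(1) C(3) by blast
  moreover have "B \<union> C \<subseteq> A"
    using assms(1) C(1) by simp
  ultimately show thesis
    by (intro that[of "B \<union> C"]) simp_all
qed

lemma RN_equiv: "equiv U R \<Longrightarrow> RN U R x = R``{x}"
  unfolding RN_def equiv_def refl_on_def by auto

lemma inj_on_classes_iff:
  assumes "equiv U R" and "T \<subseteq> U"
  shows "inj_on (\<lambda>x. R``{x}) T \<longleftrightarrow> (\<forall>a\<in>T. \<forall>b\<in>T. (a, b) \<in> R \<longrightarrow> a = b)"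
  unfolding inj_on_def using assms(2) eq_equiv_class_iff[OF assms(1)] by (meson subsetD)

lemma supp_sets_equiv_iff:
  assumes "equiv U R"
  shows "T \<in> supp_sets U R \<longleftrightarrow> T \<subseteq> U \<and> (\<lambda>x. R``{x}) ` U \<subseteq> (\<lambda>x. R``{x}) ` T"
proof -
  have meets: "RN U R x \<inter> T \<noteq> {} \<longleftrightarrow> R``{x} \<in> (\<lambda>x. R``{x}) ` T" if "x \<in> U" "T \<subseteq> U" for x
  proof -
    have "\<forall>y\<in>T. (x, y) \<in> R \<longleftrightarrow> R``{x} = R``{y}"
      using that eq_equiv_class_iff[OF assms] by blast
    then show ?thesis
      unfolding RN_def using that(2) by blast
  qed
  have "Rstar U R T = U \<longleftrightarrow> (\<forall>x\<in>U. RN U R x \<inter> T \<noteq> {})"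
    unfolding Rstar_def by blast
  then show ?thesis
    unfolding supp_sets_def image_subset_iff using meets by blast
qed

lemma min_supp_sets_equiv_iff:
  assumes e: "equiv U R"
  shows "T \<in> min_supp_sets U R \<longleftrightarrow> T \<in> supp_sets U R \<and> inj_on (\<lambda>x. R``{x}) T"
proof
  assume T: "T \<in> min_supp_sets U R"
  then have TS: "T \<in> supp_sets U R" and TU: "T \<subseteq> U"
    unfolding min_supp_sets_def supp_sets_def by auto
  have covers: "(\<lambda>x. R``{x}) ` U \<subseteq> (\<lambda>x. R``{x}) ` T"
    using TS by (simp add: supp_sets_equiv_iff[OF e])
  have "a = b" if ab: "a \<in> T" "b \<in> T" "(a, b) \<in> R" for a b
  proof (rule ccontr)
    assume "a \<noteq> b"
    have "R``{a} = R``{b}"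
      by (rule equiv_class_eq[OF e ab(3)])
    \<comment> \<open>so b is redundant: its class is already met at a\<close>
    then have "(\<lambda>x. R``{x}) ` T \<subseteq> (\<lambda>x. R``{x}) ` (T - {b})"
      using ab(1) \<open>a \<noteq> b\<close> by (auto simp: image_iff)
    then have "T - {b} \<in> supp_sets U R"
      unfolding supp_sets_equiv_iff[OF e] using TU covers by (meson Diff_subset order_trans)
    then show False
      using T ab(2) unfolding min_supp_sets_def by blast
  qed
  then show "T \<in> supp_sets U R \<and> inj_on (\<lambda>x. R``{x}) T"
    using TS inj_on_classes_iff[OF e TU] by blast
next
  assume T: "T \<in> supp_sets U R \<and> inj_on (\<lambda>x. R``{x}) T"
  have "T \<subseteq> Y" if Y: "Y \<in> supp_sets U R" "Y \<subseteq> T" for Y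
  proof
    fix t assume "t \<in> T"
    have "(\<lambda>x. R``{x}) ` T \<subseteq> (\<lambda>x. R``{x}) ` U"
      using T by (simp add: supp_sets_equiv_iff[OF e] image_mono)
    also have "\<dots> \<subseteq> (\<lambda>x. R``{x}) ` Y"
      using Y(1) by (simp add: supp_sets_equiv_iff[OF e])
    finally have "(\<lambda>x. R``{x}) ` T \<subseteq> (\<lambda>x. R``{x}) ` Y" .
    then obtain y where "y \<in> Y" "R``{t} = R``{y}"
      using \<open>t \<in> T\<close> by blast
    then show "t \<in> Y"
      using inj_onD[of "\<lambda>x. R``{x}" T t y] T \<open>t \<in> T\<close> Y(2) by auto
  qed
  then show "T \<in> min_supp_sets U R"
    using T unfolding min_supp_sets_def by blast
qed

lemma supp_indep_equiv_iff:
  assumes e: "equiv U R"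
  shows "I \<in> supp_indep U R \<longleftrightarrow> I \<subseteq> U \<and> inj_on (\<lambda>x. R``{x}) I"
proof
  assume "I \<in> supp_indep U R"
  then obtain T where "T \<in> min_supp_sets U R" "I \<subseteq> T"
    unfolding supp_indep_def by blast
  moreover from \<open>T \<in> min_supp_sets U R\<close> have "T \<subseteq> U" "inj_on (\<lambda>x. R``{x}) T"
    by (simp_all add: min_supp_sets_equiv_iff[OF e] supp_sets_equiv_iff[OF e])
  ultimately show "I \<subseteq> U \<and> inj_on (\<lambda>x. R``{x}) I"
    using inj_on_subset by blast
next
  assume "I \<subseteq> U \<and> inj_on (\<lambda>x. R``{x}) I"
  then obtain T where "I \<subseteq> T" "T \<subseteq> U" "inj_on (\<lambda>x. R``{x}) T"
      "(\<lambda>x. R``{x}) ` T = (\<lambda>x. R``{x}) ` U"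
    by (blast intro: inj_on_extend_to_transversal[of I U "\<lambda>x. R``{x}"])
  then have "T \<in> min_supp_sets U R"
    by (simp add: min_supp_sets_equiv_iff[OF e] supp_sets_equiv_iff[OF e])
  then show "I \<in> supp_indep U R"
    unfolding supp_indep_def using \<open>I \<subseteq> T\<close> by blast
qed

lemma supp_rank_equiv:
  assumes e: "equiv U R" and "finite X" and "X \<subseteq> U"
  shows "supp_rank U R X = card ((\<lambda>x. R``{x}) ` X)"
proof -
  let ?class = "\<lambda>x. R``{x}"
  let ?S = "{card I | I. I \<subseteq> X \<and> I \<in> supp_indep U R}"
  have indep: "I \<in> supp_indep U R \<longleftrightarrow> inj_on ?class I" if "I \<subseteq> X" for I
    using that assms(3) by (auto simp: supp_indep_equiv_iff[OF e])
  have bound: "card I \<le> card (?class ` X)" if "I \<subseteq> X" "inj_on ?class I" for I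
  proof -
    have "card I = card (?class ` I)"
      using that(2) by (simp add: card_image)
    also have "\<dots> \<le> card (?class ` X)"
      using that(1) \<open>finite X\<close> by (simp add: card_mono image_mono)
    finally show ?thesis .
  qed
  have "finite ?S"
    using \<open>finite X\<close> by simp
  moreover have "s \<le> card (?class ` X)" if "s \<in> ?S" for s
    using that indep bound by blast
  moreover have "card (?class ` X) \<in> ?S"
  proof -
    have "?class ` X \<subseteq> ?class ` X" ..
    then obtain I where I: "I \<subseteq> X" "inj_on ?class I" "?class ` I = ?class ` X"
      unfolding subset_image_inj by metis
    then have "card (?class ` X) = card I" "I \<in> supp_indep U R"
      using indep card_image by metis+
    then show ?thesis
      using I(1) by blast
  qed
  ultimately show ?thesis
    unfolding supp_rank_def by (rule Max_eqI)
qed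

lemma classes_meeting_eq_image:
  assumes "equiv U R" and "X \<subseteq> U"
  shows "{RN U R x | x. x \<in> U \<and> RN U R x \<inter> X \<noteq> {}} = (\<lambda>x. R``{x}) ` X"
  using assms equiv_class_eq_iff[OF assms(1)] unfolding RN_equiv[OF assms(1)] by blast

theorem proposition6:
  fixes U :: "'a set" and R :: "'a rel" and X :: "'a set"
  assumes "finite U" and "U \<noteq> {}" and "equiv U R" and "X \<subseteq> U"
  shows "supp_rank U R X = card {RN U R x | x. x \<in> U \<and> RN U R x \<inter> X \<noteq> {}}"
  using supp_rank_equiv[OF assms(3) finite_subset[OF assms(4,1)] assms(4)]
    classes_meeting_eq_image[OF assms(3,4)] by simp

end
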